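(* Let $G$ be an abelian group of odd order and suppose there exists a Heffter space over $G$ with $r$ parallel classes which is a linear space. Then for every $g\in G$, the order of $g$ divides $r-1$.
   Context: A half-set of an abelian group $G$ of odd order $2v+1\ge7$ is a subset $V\subseteq G\setminus\{0\}$ containing exactly one element of each pair $\{g,-g\}$, $g\ne0$. A Heffter system on $V$ with block size $k$ is a partition of $V$ into blocks of size $k$, each summing to $0$ in $G$. A Heffter space over $G$ is a partial linear space (any two distinct points in at most one block) with point set a half-set $V$ of $G$, together with a resolution (partition of its blocks into parallel classes, each partitioning $V$) in which every parallel class is a Heffter system on $V$. It is a linear space if any two distinct points lie in exactly one block. Its degree is the number of parallel classes. *)

theory Defs
  imports Main "HOL-Library.Disjoint_Sets"
begin

text \<open>The abelian group G is modelled as a finite type of class ab_group_add.\<close>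

definition add_order :: "'a::ab_group_add \<Rightarrow> nat" where
  "add_order g = (LEAST n. 0 < n \<and> (\<Sum>i<n. g) = 0)"

definition half_set :: "'a::ab_group_add set \<Rightarrow> bool" where
  "half_set V \<longleftrightarrow> V \<subseteq> UNIV - {0} \<and> (\<forall>g. g \<noteq> 0 \<longrightarrow> (g \<in> V \<longleftrightarrow> - g \<notin> V))"

definition heffter_system :: "'a::ab_group_add set \<Rightarrow> nat \<Rightarrow> 'a set set \<Rightarrow> bool" where
  "heffter_system V k P \<longleftrightarrow> partition_on V P \<and> (\<forall>B\<in>P. card B = k \<and> sum id B = 0)"

text \<open>Heffter space over G with point set V, block size k, given by its resolution R
  (a set of parallel classes; the blocks are the union of the classes).\<close>
definition heffter_space :: "'a::ab_group_add set \<Rightarrow> nat \<Rightarrow> 'a set set set \<Rightarrow> bool" where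
  "heffter_space V k R \<longleftrightarrow>
     half_set V \<and>
     disjoint R \<and>
     (\<forall>P\<in>R. heffter_system V k P) \<and>
     (\<forall>x y. x \<noteq> y \<longrightarrow> card {B \<in> \<Union>R. x \<in> B \<and> y \<in> B} \<le> 1)"

definition is_linear_space :: "'a set \<Rightarrow> 'a set set \<Rightarrow> bool" where
  "is_linear_space V Bs \<longleftrightarrow> (\<forall>x\<in>V. \<forall>y\<in>V. x \<noteq> y \<longrightarrow> (\<exists>!B. B \<in> Bs \<and> x \<in> B \<and> y \<in> B))"

end

theory Submission
  imports Defs
begin

text \<open>Fix a point x. Its pencil, the set of blocks through x, contains exactly one block of
  each parallel class, and, the space being linear, the blocks of the pencil with x removed
  partition V - {x}. Adding up the zero block sums over the pencil therefore gives
  r x + \<Sigma>(V - {x}) = 0, where r is the number of classes. Since one parallel class alone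
  shows \<Sigma>V = 0, this becomes r x - x = 0, i.e. (r - 1) x = 0. Every g \<noteq> 0 of G satisfies
  g \<in> V or -g \<in> V, hence (r - 1) g = 0 for all g.\<close>

lemma sum_lessThan_const_add:
  "(\<Sum>i<m + (n::nat). g) = (\<Sum>i<m. g) + (\<Sum>i<n. g :: 'a::comm_monoid_add)"
  by (induction n) (simp_all add: add_ac)

lemma sum_lessThan_const_mult_eq_0:
  "(\<Sum>i<n. g) = (0 :: 'a::comm_monoid_add) \<Longrightarrow> (\<Sum>i<(q::nat) * n. g) = 0"
  by (induction q) (simp_all add: sum_lessThan_const_add)

lemma sum_const_eq_sum_lessThan_card:
  "(\<Sum>a\<in>A. c) = (\<Sum>i<card A. c :: 'a::comm_monoid_add)"
  by (induction A rule: infinite_finite_induct) (simp_all add: add_ac)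

lemma add_order_dvd:
  fixes g :: "'a::ab_group_add"
  assumes "(\<Sum>i<n. g) = 0"
  shows "add_order g dvd n"
proof (cases "n = 0")
  case False
  let ?P = "\<lambda>m. 0 < m \<and> (\<Sum>i<m. g) = 0"
  have "?P (add_order g)"
    unfolding add_order_def by (rule LeastI[of ?P n]) (use False assms in simp)
  then have pos: "0 < add_order g" and annihilates: "(\<Sum>i<add_order g. g) = 0"
    by auto
  have "(\<Sum>i<n. g) = (\<Sum>i<n div add_order g * add_order g. g) + (\<Sum>i<n mod add_order g. g)"
    by (metis sum_lessThan_const_add div_mult_mod_eq)
  with assms annihilates have "(\<Sum>i<n mod add_order g. g) = 0"
    by (simp add: sum_lessThan_const_mult_eq_0)
  moreover have "\<not> ?P (n mod add_order g)"
    using pos mod_less_divisor not_less_Least unfolding add_order_def by blast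
  ultimately have "n mod add_order g = 0"
    by simp
  then show ?thesis
    by (rule mod_0_imp_dvd)
qed simp

lemma partition_on_block_containing:
  assumes "partition_on V P" "x \<in> V"
  obtains B where "{B \<in> P. x \<in> B} = {B}"
proof -
  obtain B where "B \<in> P" "x \<in> B"
    using assms partition_onD1 by blast
  moreover have "C = B" if "C \<in> P" "x \<in> C" for C
    using assms(1) \<open>B \<in> P\<close> \<open>x \<in> B\<close> that unfolding partition_on_def disjoint_def by blast
  ultimately have "{B \<in> P. x \<in> B} = {B}"
    by blast
  then show thesis
    by (rule that)
qed

lemma card_pencil_resolution:
  assumes "finite V" "disjoint R" "\<forall>P\<in>R. partition_on V P" "x \<in> V"
  shows "card {B \<in> \<Union>R. x \<in> B} = card R"
proof -
  have "finite R"
    by (rule finite_subset[of _ "Pow (Pow V)"]) (use assms(1,3) in \<open>auto dest: partition_onD1\<close>)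
  have card_block_through_x: "card {B \<in> P. x \<in> B} = 1" if P: "P \<in> R" for P
  proof -
    obtain B where block: "{B \<in> P. x \<in> B} = {B}"
      by (rule partition_on_block_containing[OF bspec[OF assms(3) P] assms(4)])
    show ?thesis
      unfolding block by simp
  qed
  have "card {B \<in> \<Union>R. x \<in> B} = card (\<Union>P\<in>R. {B \<in> P. x \<in> B})"
    by (rule arg_cong[where f = card]) blast
  also have "\<dots> = (\<Sum>P\<in>R. card {B \<in> P. x \<in> B})"
  proof (rule card_UN_disjoint)
    show "\<forall>P\<in>R. finite {B \<in> P. x \<in> B}"
      using card_block_through_x by (simp add: card_ge_0_finite)
    show "\<forall>P\<in>R. \<forall>Q\<in>R. P \<noteq> Q \<longrightarrow> {B \<in> P. x \<in> B} \<inter> {B \<in> Q. x \<in> B} = {}"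
      using assms(2) unfolding disjoint_def by blast
  qed fact
  also have "\<dots> = (\<Sum>P\<in>R. 1)"
    using card_block_through_x by (rule sum.cong[OF refl])
  finally show ?thesis
    by simp
qed

lemma linear_space_pencil_sum:
  fixes f :: "'a \<Rightarrow> 'b::comm_monoid_add"
  assumes "is_linear_space V Bs" "\<Union>Bs \<subseteq> V" "finite V" "x \<in> V"
  shows "(\<Sum>B\<in>{B \<in> Bs. x \<in> B}. sum f (B - {x})) = sum f (V - {x})"
proof -
  let ?pencil = "{B \<in> Bs. x \<in> B}"
  have line: "\<exists>!B. B \<in> Bs \<and> x \<in> B \<and> y \<in> B" if "y \<in> V - {x}" for y
    using assms(1,4) that unfolding is_linear_space_def by blast
  have "finite ?pencil"
    by (rule finite_subset[of _ "Pow V"]) (use assms(2,3) in auto)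
  moreover have "\<forall>B\<in>?pencil. finite (B - {x})"
    using assms(2) by (blast intro: rev_finite_subset[OF assms(3)])
  moreover have "\<forall>B\<in>?pencil. \<forall>C\<in>?pencil. B \<noteq> C \<longrightarrow> (B - {x}) \<inter> (C - {x}) = {}"
  proof (intro ballI impI)
    fix B C
    assume BC: "B \<in> ?pencil" "C \<in> ?pencil" "B \<noteq> C"
    show "(B - {x}) \<inter> (C - {x}) = {}"
    proof (rule ccontr)
      assume "(B - {x}) \<inter> (C - {x}) \<noteq> {}"
      then obtain y where y: "y \<in> B" "y \<in> C" "y \<in> V - {x}"
        using BC(1) assms(2) by blast
      show False
        using line[OF y(3)] y(1,2) BC by blast
    qed
  qed
  ultimately have "sum f (\<Union>B\<in>?pencil. B - {x}) = (\<Sum>B\<in>?pencil. sum f (B - {x}))"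
    by (rule sum.UNION_disjoint)
  moreover have "V - {x} \<subseteq> (\<Union>B\<in>?pencil. B - {x})"
  proof
    fix y
    assume "y \<in> V - {x}"
    then obtain B where "B \<in> Bs" "x \<in> B" "y \<in> B"
      using line[OF \<open>y \<in> V - {x}\<close>] by blast
    with \<open>y \<in> V - {x}\<close> show "y \<in> (\<Union>B\<in>?pencil. B - {x})"
      by blast
  qed
  then have "(\<Union>B\<in>?pencil. B - {x}) = V - {x}"
    using assms(2) by blast
  ultimately show ?thesis
    by simp
qed

lemma heffter_system_sum_eq_0:
  assumes "finite V" "heffter_system V k P"
  shows "sum id V = 0"
proof -
  have "sum id V = (\<Sum>B\<in>P. sum id B)"
    using sum.partition[OF assms(1)] assms(2) unfolding heffter_system_def by blast
  also have "\<dots> = 0"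
    using assms(2) unfolding heffter_system_def by (intro sum.neutral) blast
  finally show ?thesis .
qed

lemma heffter_linear_space_point_annihilated:
  assumes "finite V" "disjoint R" "\<forall>P\<in>R. heffter_system V k P" "is_linear_space V (\<Union>R)"
    and "x \<in> V"
  shows "(\<Sum>i<card R - 1. x) = 0"
proof (cases "card R")
  case (Suc r)
  then obtain P where "P \<in> R"
    by fastforce
  have partitions: "\<forall>P\<in>R. partition_on V P" and zero_sum: "\<forall>B\<in>\<Union>R. sum id B = 0"
    using assms(3) unfolding heffter_system_def by auto
  then have blocks_in_V: "\<Union>(\<Union>R) \<subseteq> V"
    by (auto dest: partition_onD1)
  have "sum id V = 0"
    using heffter_system_sum_eq_0[OF assms(1)] assms(3) \<open>P \<in> R\<close> by blast
  then have sum_V_minus_x: "sum id (V - {x}) = - x"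
    using assms(1,5) by (simp add: sum.remove eq_neg_iff_add_eq_0 add.commute)
  let ?pencil = "{B \<in> \<Union>R. x \<in> B}"
  have "0 = (\<Sum>B\<in>?pencil. sum id B)"
    using zero_sum by (intro sum.neutral[symmetric]) blast
  also have "\<dots> = (\<Sum>B\<in>?pencil. x + sum id (B - {x}))"
  proof (rule sum.cong)
    fix B
    assume "B \<in> ?pencil"
    then have "finite B" "x \<in> B"
      using blocks_in_V finite_subset[OF _ assms(1)] by blast+
    then show "sum id B = x + sum id (B - {x})"
      by (simp add: sum.remove)
  qed simp
  also have "\<dots> = (\<Sum>B\<in>?pencil. x) + sum id (V - {x})"
    by (simp only: sum.distrib linear_space_pencil_sum[OF assms(4) blocks_in_V assms(1,5)])
  also have "(\<Sum>B\<in>?pencil. x) = (\<Sum>i<card R. x)"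
    by (rule sum_const_eq_sum_lessThan_card[where A = ?pencil and c = x,
          unfolded card_pencil_resolution[OF assms(1,2) partitions assms(5)]])
  finally have "0 = (\<Sum>i<card R. x) + - x"
    unfolding sum_V_minus_x .
  then show ?thesis
    using Suc by simp
qed simp

lemma half_set_sum_lessThan_const_eq_0:
  fixes V :: "'a::ab_group_add set" and g :: 'a
  assumes "half_set V" "\<forall>x\<in>V. (\<Sum>i<n. x) = 0"
  shows "(\<Sum>i<n. g) = 0"
proof (cases "g = 0")
  case False
  then have "g \<in> V \<or> - g \<in> V"
    using assms(1) unfolding half_set_def by blast
  then show ?thesis
    using assms(2) by (auto simp: sum_negf)
qed simp

theorem proposition2p1:
  fixes V :: "'a::{ab_group_add, finite} set"
    and R :: "'a set set set"
    and k :: nat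
  assumes "odd (card (UNIV :: 'a set))"
    and "card (UNIV :: 'a set) \<ge> 7"
    and "heffter_space V k R"
    and "is_linear_space V (\<Union>R)"
  shows "\<forall>g::'a. add_order g dvd (card R - 1)"
proof
  fix g :: 'a
  have "half_set V" "disjoint R" "\<forall>P\<in>R. heffter_system V k P"
    using assms(3) unfolding heffter_space_def by auto
  then have "\<forall>x\<in>V. (\<Sum>i<card R - 1. x) = 0"
    using heffter_linear_space_point_annihilated[OF finite _ _ assms(4)] by blast
  then have "(\<Sum>i<card R - 1. g) = 0"
    using \<open>half_set V\<close> by (rule half_set_sum_lessThan_const_eq_0[rotated])
  then show "add_order g dvd (card R - 1)"
    by (rule add_order_dvd)
qed

end
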